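(* Let $G$ be a finite group acting (via a homomorphism $\Gamma_G: G \to S_A$) on a finite set $A = X \sqcup Y$ of cardinality $n$, and suppose the action is partition-preserving. Let $\Omega = \Omega_X \sqcup \Omega_Y$ be a set of colors, with weight functions $\omega_X:\Omega_X\to\mathbb{N}^+$ and $\omega_Y:\Omega_Y\to\mathbb{N}^+$ having only finitely many colors of each weight, and let $f_X$, $f_Y$ be their generating functions. Let $\Phi$ be the set of valid colorings of $A$, on which $G$ acts by $(g\varphi)(a)=\varphi(ga)$. Then, as formal power series in two variables, $$\sum_{a,b\ge 0} N_{a,b}\, x^a y^b = \tilde Z_G\big(f_X(x),\ldots,f_X(x^n), f_Y(y),\ldots, f_Y(y^n)\big),$$ where $N_{a,b}$ is the number of orbits of $G$ on $\Phi$ consisting of colorings $\varphi$ with $\sum_{c\in X}\omega_X(\varphi(c)) = a$ and $\sum_{c\in Y}\omega_Y(\varphi(c)) = b$.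
   Context: For a finite set $A$, $S_A$ is the group of bijections $A\to A$; every element of $S_A$ decomposes uniquely (up to order) into pairwise disjoint cycles. An action of $G$ on $A = X\sqcup Y$ is partition-preserving if for all $g\in G$ and $a\in A$: $ga\in X \iff a\in X$ and $ga\in Y\iff a\in Y$. For $g\in G$, $C_k^X(g)$ (resp. $C_k^Y(g)$) denotes the number of $k$-cycles (fixed points counting as 1-cycles) in the disjoint cycle decomposition of $\Gamma_G(g)$ contained in $X$ (resp. $Y$). The bipartite cycle index is $$\tilde Z_G(x_1,\ldots,x_n,y_1,\ldots,y_n) = \frac{1}{|G|}\sum_{g\in G} x_1^{C_1^X(g)}\cdots x_n^{C_n^X(g)}\, y_1^{C_1^Y(g)}\cdots y_n^{C_n^Y(g)}.$$ For a weight function $\omega:\Omega'\to\mathbb{N}$ with finite fibers, its generating function is $f_\omega(x)=\sum_{i\ge 0}|\omega^{-1}(i)|\,x^i$. A coloring $\varphi: A\to\Omega_X\sqcup\Omega_Y$ is valid if $\varphi(c)\in\Omega_X\iff c\in X$ and $\varphi(c)\in\Omega_Y\iff c\in Y$. *)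

theory Defs
  imports "HOL-Algebra.Group_Action" "HOL-Computational_Algebra.Formal_Power_Series" "HOL-Library.FuncSet"
begin

definition perm_cycle :: "('a \<Rightarrow> 'a) \<Rightarrow> 'a \<Rightarrow> 'a set" where
  "perm_cycle p a = {(p ^^ i) a | i. True}"

definition cycles_in :: "('a \<Rightarrow> 'a) \<Rightarrow> 'a set \<Rightarrow> nat \<Rightarrow> nat" where
  "cycles_in p S k = card {perm_cycle p a | a. a \<in> S \<and> perm_cycle p a \<subseteq> S \<and> card (perm_cycle p a) = k}"

text \<open>Bipartite cycle index, evaluated in the two-variable power series ring
  Q[[x]][[y]] (outer variable y, inner variable x).\<close>
definition bip_cycle_index ::
  "('g, 'm) monoid_scheme \<Rightarrow> ('g \<Rightarrow> 'a \<Rightarrow> 'a) \<Rightarrow> 'a set \<Rightarrow> 'a set \<Rightarrow> nat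
    \<Rightarrow> (nat \<Rightarrow> rat fps fps) \<Rightarrow> (nat \<Rightarrow> rat fps fps) \<Rightarrow> rat fps fps" where
  "bip_cycle_index G \<Gamma> X Y n xs ys =
     fps_const (fps_const (1 / of_nat (card (carrier G)))) *
     (\<Sum>g\<in>carrier G. \<Prod>k\<in>{1..n}. xs k ^ cycles_in (\<Gamma> g) X k * ys k ^ cycles_in (\<Gamma> g) Y k)"

definition gen_fun :: "'c set \<Rightarrow> ('c \<Rightarrow> nat) \<Rightarrow> rat fps" where
  "gen_fun \<Omega> \<omega> = Abs_fps (\<lambda>i. of_nat (card {c \<in> \<Omega>. \<omega> c = i}))"

definition valid_colorings :: "'a set \<Rightarrow> 'a set \<Rightarrow> 'a set \<Rightarrow> 'c set \<Rightarrow> 'c set \<Rightarrow> ('a \<Rightarrow> 'c) set" where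
  "valid_colorings A X Y \<Omega>X \<Omega>Y =
     {\<phi> \<in> A \<rightarrow>\<^sub>E (\<Omega>X \<union> \<Omega>Y). \<forall>c\<in>A. (\<phi> c \<in> \<Omega>X \<longleftrightarrow> c \<in> X) \<and> (\<phi> c \<in> \<Omega>Y \<longleftrightarrow> c \<in> Y)}"

definition act_col :: "('g \<Rightarrow> 'a \<Rightarrow> 'a) \<Rightarrow> 'a set \<Rightarrow> 'g \<Rightarrow> ('a \<Rightarrow> 'c) \<Rightarrow> ('a \<Rightarrow> 'c)" where
  "act_col \<Gamma> A g \<phi> = (\<lambda>a\<in>A. \<phi> (\<Gamma> g a))"

definition col_orbits :: "('g, 'm) monoid_scheme \<Rightarrow> ('g \<Rightarrow> 'a \<Rightarrow> 'a) \<Rightarrow> 'a set \<Rightarrow> ('a \<Rightarrow> 'c) set \<Rightarrow> ('a \<Rightarrow> 'c) set set" where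
  "col_orbits G \<Gamma> A \<Phi> = {{act_col \<Gamma> A g \<phi> | g. g \<in> carrier G} | \<phi>. \<phi> \<in> \<Phi>}"

definition N_orbits ::
  "('g, 'm) monoid_scheme \<Rightarrow> ('g \<Rightarrow> 'a \<Rightarrow> 'a) \<Rightarrow> 'a set \<Rightarrow> 'a set \<Rightarrow> 'a set
   \<Rightarrow> 'c set \<Rightarrow> 'c set \<Rightarrow> ('c \<Rightarrow> nat) \<Rightarrow> ('c \<Rightarrow> nat) \<Rightarrow> nat \<Rightarrow> nat \<Rightarrow> nat" where
  "N_orbits G \<Gamma> A X Y \<Omega>X \<Omega>Y \<omega>X \<omega>Y a b =
     card {Orb \<in> col_orbits G \<Gamma> A (valid_colorings A X Y \<Omega>X \<Omega>Y).
            \<forall>\<phi>\<in>Orb. (\<Sum>c\<in>X. \<omega>X (\<phi> c)) = a \<and> (\<Sum>c\<in>Y. \<omega>Y (\<phi> c)) = b}"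

end

theory Submission
  imports Defs "HOL-Computational_Algebra.Formal_Laurent_Series"
begin

text \<open>
  By Burnside's lemma, |G| N(a,b) is the sum over g in G of the number of valid colorings of
  weight (a,b) fixed by g. A coloring fixed by g is constant on the cycles of g, and since g
  preserves X and Y it is a pair of independent colorings of the cycles in X and of the cycles
  in Y. Giving a k-cycle a color of weight i contributes k i to the weight, so the colorings of
  one k-cycle are counted by f(x^k), and the g-fixed colorings of X are counted by the product of
  f_X(x^k) over the cycles of g in X, which is the monomial of g in the cycle index evaluated at
  x_k = f_X(x^k); likewise for Y. Averaging over G gives the bipartite cycle index.
\<close>

section \<open>Generating series of weighted sets\<close>

definition weight_fps :: "'x set \<Rightarrow> ('x \<Rightarrow> nat) \<Rightarrow> 'r::comm_ring_1 fps" where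
  "weight_fps T w = Abs_fps (\<lambda>n. of_nat (card {x \<in> T. w x = n}))"

abbreviation finite_fibers :: "'x set \<Rightarrow> ('x \<Rightarrow> nat) \<Rightarrow> bool" where
  "finite_fibers T w \<equiv> \<forall>n. finite {x \<in> T. w x = n}"

lemma weight_fps_nth: "weight_fps T w $ n = of_nat (card {x \<in> T. w x = n})"
  by (simp add: weight_fps_def)

lemma weight_fps_bij_betw:
  assumes "bij_betw h T U" and "\<And>x. x \<in> T \<Longrightarrow> v (h x) = w x"
  shows "weight_fps T w = weight_fps U v"
proof (rule fps_ext)
  fix n
  have "bij_betw h {x \<in> T. w x = n} {y \<in> U. v y = n}"
    using assms by (auto simp: bij_betw_def inj_on_def image_iff)
  then show "weight_fps T w $ n = weight_fps U v $ n"
    by (simp add: weight_fps_nth bij_betw_same_card)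
qed

lemma weight_fps_scale:
  assumes "m > 0"
  shows "weight_fps T (\<lambda>x. m * w x) = weight_fps T w oo fps_X ^ m"
proof (rule fps_ext)
  fix n
  have "{x \<in> T. m * w x = n} = (if m dvd n then {x \<in> T. w x = n div m} else {})"
    using assms by auto
  then show "weight_fps T (\<lambda>x. m * w x) $ n = (weight_fps T w oo fps_X ^ m) $ n"
    by (simp add: fps_nth_compose_X_power weight_fps_nth)
qed

lemma weight_fps_Times:
  assumes "finite_fibers T w" and "finite_fibers U v"
  shows "weight_fps (T \<times> U) (\<lambda>(x, y). w x + v y) = weight_fps T w * weight_fps U v"
proof (rule fps_ext)
  fix n
  have "{z \<in> T \<times> U. (\<lambda>(x, y). w x + v y) z = n}
      = (\<Union>i\<in>{0..n}. {x \<in> T. w x = i} \<times> {y \<in> U. v y = n - i})"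
    by force
  then have "card {z \<in> T \<times> U. (\<lambda>(x, y). w x + v y) z = n}
      = (\<Sum>i=0..n. card ({x \<in> T. w x = i} \<times> {y \<in> U. v y = n - i}))"
    by (simp only:) (rule card_UN_disjoint, use assms in auto)
  then show "weight_fps (T \<times> U) (\<lambda>(x, y). w x + v y) $ n = (weight_fps T w * weight_fps U v) $ n"
    by (simp add: weight_fps_nth fps_mult_nth card_cartesian_product)
qed

lemma finite_fibers_PiE_sum:
  assumes "finite C" and "\<And>Z. Z \<in> C \<Longrightarrow> finite_fibers (\<Omega> Z) (w Z)"
  shows "finite_fibers (Pi\<^sub>E C \<Omega>) (\<lambda>\<psi>. \<Sum>Z\<in>C. w Z (\<psi> Z))"
proof
  fix n
  have "{\<psi> \<in> Pi\<^sub>E C \<Omega>. (\<Sum>Z\<in>C. w Z (\<psi> Z)) = n} \<subseteq> (\<Pi>\<^sub>E Z\<in>C. \<Union>i\<le>n. {c \<in> \<Omega> Z. w Z c = i})"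
  proof (intro subsetI PiE_I)
    fix \<psi> Z
    assume \<psi>: "\<psi> \<in> {\<psi> \<in> Pi\<^sub>E C \<Omega>. (\<Sum>Z\<in>C. w Z (\<psi> Z)) = n}" and "Z \<in> C"
    then have "w Z (\<psi> Z) \<le> n"
      using member_le_sum[of Z C "\<lambda>Z. w Z (\<psi> Z)"] \<open>finite C\<close> by auto
    then show "\<psi> Z \<in> (\<Union>i\<le>n. {c \<in> \<Omega> Z. w Z c = i})"
      using \<psi> \<open>Z \<in> C\<close> by auto
  qed (auto simp: PiE_def extensional_def)
  moreover have "finite (\<Pi>\<^sub>E Z\<in>C. \<Union>i\<le>n. {c \<in> \<Omega> Z. w Z c = i})"
    using assms by (intro finite_PiE) auto
  ultimately show "finite {\<psi> \<in> Pi\<^sub>E C \<Omega>. (\<Sum>Z\<in>C. w Z (\<psi> Z)) = n}"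
    by (rule finite_subset)
qed

lemma weight_fps_PiE_sum:
  assumes "finite C" and "\<And>Z. Z \<in> C \<Longrightarrow> finite_fibers (\<Omega> Z) (w Z)"
  shows "(weight_fps (Pi\<^sub>E C \<Omega>) (\<lambda>\<psi>. \<Sum>Z\<in>C. w Z (\<psi> Z)) :: 'r::comm_ring_1 fps)
    = (\<Prod>Z\<in>C. weight_fps (\<Omega> Z) (w Z))"
  using assms
proof (induction C rule: finite_induct)
  case empty
  show ?case
    by (rule fps_ext) (simp add: weight_fps_nth)
next
  case (insert z C)
  have "bij_betw (\<lambda>(c, \<psi>). \<psi>(z := c)) (\<Omega> z \<times> Pi\<^sub>E C \<Omega>) (Pi\<^sub>E (insert z C) \<Omega>)"
    using insert.hyps by (simp add: bij_betw_def inj_combinator PiE_insert_eq)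
  moreover have "(\<Sum>Z\<in>insert z C. w Z ((\<psi>(z := c)) Z)) = w z c + (\<Sum>Z\<in>C. w Z (\<psi> Z))" for c \<psi>
    using insert.hyps by (auto intro: sum.cong)
  ultimately have "weight_fps (Pi\<^sub>E (insert z C) \<Omega>) (\<lambda>\<psi>. \<Sum>Z\<in>insert z C. w Z (\<psi> Z))
      = (weight_fps (\<Omega> z \<times> Pi\<^sub>E C \<Omega>) (\<lambda>(c, \<psi>). w z c + (\<Sum>Z\<in>C. w Z (\<psi> Z))) :: 'r fps)"
    by (intro weight_fps_bij_betw[symmetric]) auto
  also have "\<dots> = weight_fps (\<Omega> z) (w z) * weight_fps (Pi\<^sub>E C \<Omega>) (\<lambda>\<psi>. \<Sum>Z\<in>C. w Z (\<psi> Z))"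
    using insert.hyps insert.prems by (intro weight_fps_Times finite_fibers_PiE_sum) auto
  also have "\<dots> = weight_fps (\<Omega> z) (w z) * (\<Prod>Z\<in>C. weight_fps (\<Omega> Z) (w Z))"
    using insert.IH[OF insert.prems] by simp
  finally show ?case
    using insert.hyps by simp
qed

section \<open>Cycles of a permutation and colorings constant on them\<close>

lemma funpow_in_perm_cycle: "(p ^^ i) a \<in> perm_cycle p a"
  by (auto simp: perm_cycle_def)

lemma self_in_perm_cycle: "a \<in> perm_cycle p a"
  using funpow_in_perm_cycle[where i = 0] by simp

lemma perm_cycle_subset:
  assumes "bij_betw p S S" and "a \<in> S"
  shows "perm_cycle p a \<subseteq> S"
  using bij_betw_apply[OF bij_betw_funpow[OF assms(1)] assms(2)] by (auto simp: perm_cycle_def)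

lemma perm_cycle_subset_perm_cycle: "b \<in> perm_cycle p a \<Longrightarrow> perm_cycle p b \<subseteq> perm_cycle p a"
  by (auto simp: perm_cycle_def simp flip: funpow_add comp_apply[of "p ^^ _" "p ^^ _"])

lemma funpow_periodic:
  assumes "finite S" and "bij_betw p S S" and "a \<in> S"
  obtains N where "N > 0" and "(p ^^ N) a = a"
proof -
  have "\<not> inj_on (\<lambda>i. (p ^^ i) a) {0..card S}"
  proof
    assume "inj_on (\<lambda>i. (p ^^ i) a) {0..card S}"
    then have "card {0..card S} \<le> card S"
      using assms perm_cycle_subset funpow_in_perm_cycle by (intro card_inj_on_le) fastforce+
    then show False
      by simp
  qed
  then obtain i j where "i < j" and "(p ^^ i) a = (p ^^ j) a"
    unfolding inj_on_def by (metis linorder_neqE_nat)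
  then have "(p ^^ i) ((p ^^ (j - i)) a) = (p ^^ i) a"
    by (simp flip: comp_apply[of "p ^^ i"] funpow_add)
  moreover have "(p ^^ (j - i)) a \<in> S"
    using assms perm_cycle_subset funpow_in_perm_cycle by fast
  ultimately have "(p ^^ (j - i)) a = a"
    using assms bij_betw_funpow[OF assms(2), of i] by (auto simp: bij_betw_def dest: inj_onD)
  with \<open>i < j\<close> show thesis
    by (intro that[of "j - i"]) simp_all
qed

lemma perm_cycle_eq:
  assumes "finite S" and "bij_betw p S S" and "a \<in> S" and "b \<in> perm_cycle p a"
  shows "perm_cycle p b = perm_cycle p a"
proof
  show "perm_cycle p b \<subseteq> perm_cycle p a"
    using assms(4) by (rule perm_cycle_subset_perm_cycle)
  obtain i where i: "b = (p ^^ i) a"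
    using assms(4) by (auto simp: perm_cycle_def)
  obtain N where "N > 0" and N: "(p ^^ N) a = a"
    using funpow_periodic[OF assms(1-3)] .
  have "(p ^^ (N * i - i)) b = (p ^^ (N * i - i + i)) a"
    by (simp add: i funpow_add)
  also have "\<dots> = (p ^^ ((N * i) mod N)) a"
    using \<open>N > 0\<close> funpow_mod_eq[OF N, of "N * i"] by simp
  also have "\<dots> = a"
    by simp
  finally have "a \<in> perm_cycle p b"
    by (metis funpow_in_perm_cycle)
  then show "perm_cycle p a \<subseteq> perm_cycle p b"
    by (rule perm_cycle_subset_perm_cycle)
qed

lemma invariant_funpow:
  assumes "\<And>x. x \<in> S \<Longrightarrow> \<phi> (p x) = \<phi> x" and "bij_betw p S S" and "a \<in> S"
  shows "\<phi> ((p ^^ i) a) = \<phi> a"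
proof (induction i)
  case (Suc i)
  have "(p ^^ i) a \<in> S"
    using assms(2,3) perm_cycle_subset funpow_in_perm_cycle by fast
  with Suc show ?case
    using assms(1) by simp
qed simp

lemma invariant_const_on_perm_cycle:
  assumes "\<And>x. x \<in> S \<Longrightarrow> \<phi> (p x) = \<phi> x" and "bij_betw p S S" and "a \<in> S"
    and "b \<in> perm_cycle p a"
  shows "\<phi> b = \<phi> a"
  using assms(4) invariant_funpow[where \<phi> = \<phi>, OF assms(1-3)] by (auto simp: perm_cycle_def)

lemma sum_over_perm_cycles:
  assumes "finite S" and "bij_betw p S S"
  shows "(\<Sum>x\<in>S. f (perm_cycle p x)) = (\<Sum>Z\<in>perm_cycle p ` S. of_nat (card Z) * f Z)"
proof -
  have fiber: "{x \<in> S. perm_cycle p x = Z} = Z" if cycle: "Z \<in> perm_cycle p ` S" for Z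
  proof -
    obtain a where "a \<in> S" and Z: "Z = perm_cycle p a"
      using cycle by blast
    have "Z \<subseteq> S"
      using assms(2) \<open>a \<in> S\<close> Z by (simp add: perm_cycle_subset)
    moreover have "perm_cycle p x = Z" if "x \<in> Z" for x
      using perm_cycle_eq[OF assms \<open>a \<in> S\<close>] that Z by simp
    moreover have "x \<in> perm_cycle p x" for x
      by (rule self_in_perm_cycle)
    ultimately show ?thesis
      by blast
  qed
  have "(\<Sum>x\<in>S. f (perm_cycle p x))
      = (\<Sum>Z\<in>perm_cycle p ` S. \<Sum>x\<in>{x \<in> S. perm_cycle p x = Z}. f (perm_cycle p x))"
    by (rule sum.image_gen[OF assms(1), of "\<lambda>x. f (perm_cycle p x)" "perm_cycle p"])
  also have "\<dots> = (\<Sum>Z\<in>perm_cycle p ` S. \<Sum>x\<in>Z. f Z)"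
  proof (rule sum.cong[OF refl])
    fix Z
    assume "Z \<in> perm_cycle p ` S"
    have "(\<Sum>x\<in>{x \<in> S. perm_cycle p x = Z}. f (perm_cycle p x)) = (\<Sum>x\<in>{x \<in> S. perm_cycle p x = Z}. f Z)"
      by (rule sum.cong[OF refl]) simp
    then show "(\<Sum>x\<in>{x \<in> S. perm_cycle p x = Z}. f (perm_cycle p x)) = (\<Sum>x\<in>Z. f Z)"
      by (simp only: fiber[OF \<open>Z \<in> perm_cycle p ` S\<close>])
  qed
  finally show ?thesis
    by simp
qed

definition fixed_colorings :: "('a \<Rightarrow> 'a) \<Rightarrow> 'a set \<Rightarrow> 'c set \<Rightarrow> ('a \<Rightarrow> 'c) set" where
  "fixed_colorings p S \<Omega> = {\<phi> \<in> S \<rightarrow>\<^sub>E \<Omega>. \<forall>x\<in>S. \<phi> (p x) = \<phi> x}"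

lemma image_perm_cycle_fixed_coloring:
  assumes "bij_betw p S S" and "\<phi> \<in> fixed_colorings p S \<Omega>" and "x \<in> S"
  shows "\<phi> ` perm_cycle p x = {\<phi> x}"
proof -
  have "\<phi> (p y) = \<phi> y" if "y \<in> S" for y
    using assms(2) that by (simp add: fixed_colorings_def)
  then have "\<phi> y = \<phi> x" if "y \<in> perm_cycle p x" for y
    using invariant_const_on_perm_cycle[where \<phi> = \<phi>, OF _ assms(1,3) that] by blast
  then have "\<phi> ` perm_cycle p x = (\<lambda>_. \<phi> x) ` perm_cycle p x"
    by (rule image_cong[OF refl])
  then show ?thesis
    using image_constant[OF self_in_perm_cycle] by simp
qed

lemma bij_betw_perm_cycle_colorings:
  assumes "finite S" and "bij_betw p S S"
  shows "bij_betw (\<lambda>\<psi>. \<lambda>x\<in>S. \<psi> (perm_cycle p x)) (perm_cycle p ` S \<rightarrow>\<^sub>E \<Omega>) (fixed_colorings p S \<Omega>)"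
    (is "bij_betw ?lift (?C \<rightarrow>\<^sub>E \<Omega>) _")
proof (rule bij_betw_byWitness[where f' = "\<lambda>\<phi>. \<lambda>Z\<in>?C. the_elem (\<phi> ` Z)"])
  have "perm_cycle p (p x) = perm_cycle p x" if "x \<in> S" for x
    using perm_cycle_eq[OF assms that, of "p x"] funpow_in_perm_cycle[of 1 p x] by simp
  then show lift: "?lift ` (?C \<rightarrow>\<^sub>E \<Omega>) \<subseteq> fixed_colorings p S \<Omega>"
    using bij_betwE[OF assms(2)] by (auto simp: fixed_colorings_def)
  show "\<forall>\<psi>\<in>?C \<rightarrow>\<^sub>E \<Omega>. (\<lambda>Z\<in>?C. the_elem (?lift \<psi> ` Z)) = \<psi>"
  proof (intro ballI extensionalityI[where A = ?C])
    fix \<psi> Z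
    assume "\<psi> \<in> ?C \<rightarrow>\<^sub>E \<Omega>" and "Z \<in> ?C"
    then obtain x where "x \<in> S" and Z: "Z = perm_cycle p x" and "?lift \<psi> \<in> fixed_colorings p S \<Omega>"
      using lift by blast
    then have "?lift \<psi> ` Z = {\<psi> Z}"
      using image_perm_cycle_fixed_coloring[OF assms(2)] by (metis restrict_apply')
    then show "(\<lambda>Z\<in>?C. the_elem (?lift \<psi> ` Z)) Z = \<psi> Z"
      using \<open>Z \<in> ?C\<close> by simp
  qed (auto simp: PiE_def)
  show "(\<lambda>\<phi>. \<lambda>Z\<in>?C. the_elem (\<phi> ` Z)) ` fixed_colorings p S \<Omega> \<subseteq> ?C \<rightarrow>\<^sub>E \<Omega>"
  proof (rule image_subsetI)
    fix \<phi>
    assume \<phi>: "\<phi> \<in> fixed_colorings p S \<Omega>"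
    then have "the_elem (\<phi> ` perm_cycle p x) \<in> \<Omega>" if "x \<in> S" for x
      using image_perm_cycle_fixed_coloring[OF assms(2) \<phi> that] that by (auto simp: fixed_colorings_def)
    then show "(\<lambda>Z\<in>?C. the_elem (\<phi> ` Z)) \<in> ?C \<rightarrow>\<^sub>E \<Omega>"
      by auto
  qed
  show "\<forall>\<phi>\<in>fixed_colorings p S \<Omega>. ?lift (\<lambda>Z\<in>?C. the_elem (\<phi> ` Z)) = \<phi>"
  proof (intro ballI extensionalityI[where A = S])
    fix \<phi> x
    assume "\<phi> \<in> fixed_colorings p S \<Omega>" and "x \<in> S"
    then show "?lift (\<lambda>Z\<in>?C. the_elem (\<phi> ` Z)) x = \<phi> x"
      using image_perm_cycle_fixed_coloring[OF assms(2), of \<phi>] by simp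
  qed (auto simp: fixed_colorings_def PiE_def)
qed

lemma weight_fps_fixed_colorings:
  fixes p :: "'a \<Rightarrow> 'a" and \<omega> :: "'c \<Rightarrow> nat"
  assumes "finite S" and "bij_betw p S S" and "finite_fibers \<Omega> \<omega>" and "card S \<le> n"
  shows "(weight_fps (fixed_colorings p S \<Omega>) (\<lambda>\<phi>. \<Sum>x\<in>S. \<omega> (\<phi> x)) :: 'r::comm_ring_1 fps)
    = (\<Prod>k\<in>{1..n}. (weight_fps \<Omega> \<omega> oo fps_X ^ k) ^ cycles_in p S k)"
proof -
  let ?C = "perm_cycle p ` S"
  let ?f = "weight_fps \<Omega> \<omega> :: 'r fps"
  have card_cycle: "0 < card Z \<and> card Z \<le> n" if cycle: "Z \<in> ?C" for Z
  proof -
    obtain x where "x \<in> S" and Z: "Z = perm_cycle p x"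
      using cycle by blast
    then have "Z \<subseteq> S" and "x \<in> Z"
      using perm_cycle_subset[OF assms(2)] self_in_perm_cycle by auto
    then show ?thesis
      using assms(1,4) card_mono[OF assms(1), of Z] by (auto simp: card_gt_0_iff intro: finite_subset)
  qed
  have fibers: "finite_fibers \<Omega> (\<lambda>c. m * \<omega> c)" if "m > 0" for m
  proof
    fix i
    have "{c \<in> \<Omega>. m * \<omega> c = i} \<subseteq> {c \<in> \<Omega>. \<omega> c = i div m}"
      using that by auto
    then show "finite {c \<in> \<Omega>. m * \<omega> c = i}"
      using assms(3) finite_subset by blast
  qed
  have "weight_fps (fixed_colorings p S \<Omega>) (\<lambda>\<phi>. \<Sum>x\<in>S. \<omega> (\<phi> x))
      = (weight_fps (?C \<rightarrow>\<^sub>E \<Omega>) (\<lambda>\<psi>. \<Sum>Z\<in>?C. card Z * \<omega> (\<psi> Z)) :: 'r fps)"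
  proof (rule weight_fps_bij_betw[OF bij_betw_perm_cycle_colorings[OF assms(1,2)], symmetric])
    fix \<psi> :: "'a set \<Rightarrow> 'c"
    show "(\<Sum>x\<in>S. \<omega> ((\<lambda>x\<in>S. \<psi> (perm_cycle p x)) x)) = (\<Sum>Z\<in>?C. card Z * \<omega> (\<psi> Z))"
      using sum_over_perm_cycles[OF assms(1,2), of "\<lambda>Z. \<omega> (\<psi> Z)"] by simp
  qed
  also have "\<dots> = (\<Prod>Z\<in>?C. weight_fps \<Omega> (\<lambda>c. card Z * \<omega> c))"
    using assms(1) card_cycle fibers by (intro weight_fps_PiE_sum) auto
  also have "\<dots> = (\<Prod>Z\<in>?C. ?f oo fps_X ^ card Z)"
    using card_cycle by (intro prod.cong refl weight_fps_scale) auto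
  also have "\<dots> = (\<Prod>k\<in>{1..n}. \<Prod>Z\<in>{Z \<in> ?C. card Z = k}. ?f oo fps_X ^ card Z)"
    using assms(1) card_cycle by (intro prod.group[symmetric]) (auto simp: Suc_le_eq)
  also have "\<dots> = (\<Prod>k\<in>{1..n}. (?f oo fps_X ^ k) ^ card {Z \<in> ?C. card Z = k})"
    by (intro prod.cong refl) simp
  also have "\<dots> = (\<Prod>k\<in>{1..n}. (?f oo fps_X ^ k) ^ cycles_in p S k)"
  proof -
    have "{Z \<in> ?C. card Z = k} = {perm_cycle p a | a. a \<in> S \<and> perm_cycle p a \<subseteq> S \<and> card (perm_cycle p a) = k}" for k
      using perm_cycle_subset[OF assms(2)] by blast
    then show ?thesis
      by (simp only: cycles_in_def)
  qed
  finally show ?thesis .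
qed

section \<open>The induced action on colorings\<close>

lemma group_actionI:
  assumes "group G"
    and closed: "\<And>g x. g \<in> carrier G \<Longrightarrow> x \<in> E \<Longrightarrow> \<phi> g x \<in> E"
    and extensional: "\<And>g. g \<in> carrier G \<Longrightarrow> \<phi> g \<in> extensional E"
    and one: "\<And>x. x \<in> E \<Longrightarrow> \<phi> \<one>\<^bsub>G\<^esub> x = x"
    and mult: "\<And>g h x. g \<in> carrier G \<Longrightarrow> h \<in> carrier G \<Longrightarrow> x \<in> E \<Longrightarrow> \<phi> (g \<otimes>\<^bsub>G\<^esub> h) x = \<phi> g (\<phi> h x)"
  shows "group_action G E \<phi>"
proof -
  interpret G: group G
    by fact
  have Bij: "\<phi> g \<in> Bij E" if g: "g \<in> carrier G" for g
  proof -
    have inverse: "\<phi> (inv\<^bsub>G\<^esub> h) (\<phi> h x) = x" if "h \<in> carrier G" and "x \<in> E" for h x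
      using that by (simp flip: mult add: one)
    have "bij_betw (\<phi> g) E E"
    proof (rule bij_betw_byWitness[where f' = "\<phi> (inv\<^bsub>G\<^esub> g)"])
      show "\<forall>x\<in>E. \<phi> g (\<phi> (inv\<^bsub>G\<^esub> g) x) = x"
        using inverse[of "inv\<^bsub>G\<^esub> g"] g by simp
    qed (use g closed inverse in auto)
    then show ?thesis
      using extensional[OF g] by (simp add: Bij_def)
  qed
  have "\<phi> \<in> hom G (BijGroup E)"
  proof (rule homI)
    fix g h
    assume "g \<in> carrier G" and "h \<in> carrier G"
    then show "\<phi> (g \<otimes>\<^bsub>G\<^esub> h) = \<phi> g \<otimes>\<^bsub>BijGroup E\<^esub> \<phi> h"
      using Bij extensional closed mult
      by (auto simp: BijGroup_def compose_def intro!: extensionalityI[where A = E])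
  qed (simp add: BijGroup_def Bij)
  then show ?thesis
    by (simp add: group_action_def group_hom_def group_hom_axioms_def group_BijGroup G.group_axioms)
qed

lemma act_col_mult:
  assumes "group_action G A \<Gamma>" and "g \<in> carrier G" and "h \<in> carrier G"
  shows "act_col \<Gamma> A (g \<otimes>\<^bsub>G\<^esub> h) \<phi> = act_col \<Gamma> A h (act_col \<Gamma> A g \<phi>)"
  using group_action.composition_rule[OF assms(1) _ assms(2,3)]
    group_action.element_image[OF assms(1) assms(3) _ refl]
  by (auto simp: act_col_def)

lemma act_col_one:
  assumes "group_action G A \<Gamma>" and "\<phi> \<in> extensional A"
  shows "act_col \<Gamma> A \<one>\<^bsub>G\<^esub> \<phi> = \<phi>"
  using assms group_action.id_eq_one[OF assms(1), symmetric]
  by (auto simp: act_col_def extensional_def)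

lemma act_col_fixed_iff:
  assumes "\<phi> \<in> extensional A"
  shows "act_col \<Gamma> A g \<phi> = \<phi> \<longleftrightarrow> (\<forall>x\<in>A. \<phi> (\<Gamma> g x) = \<phi> x)"
  using assms by (auto simp: act_col_def fun_eq_iff extensional_def restrict_def)

lemma sum_act_col:
  assumes "bij_betw (\<Gamma> g) S S" and "S \<subseteq> A"
  shows "(\<Sum>c\<in>S. \<omega> (act_col \<Gamma> A g \<phi> c)) = (\<Sum>c\<in>S. \<omega> (\<phi> c))"
proof -
  have "(\<Sum>c\<in>S. \<omega> (act_col \<Gamma> A g \<phi> c)) = (\<Sum>c\<in>S. \<omega> (\<phi> (\<Gamma> g c)))"
    using assms(2) by (intro sum.cong) (auto simp: act_col_def)
  also have "\<dots> = (\<Sum>c\<in>S. \<omega> (\<phi> c))"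
    using sum.reindex_bij_betw[OF assms(1), of "\<lambda>c. \<omega> (\<phi> c)"] .
  finally show ?thesis .
qed

text \<open>
  Since act_col (g h) = act_col h \<circ> act_col g, the colorings carry a right action; composing
  with inversion turns it into the left action that group_action requires.
\<close>
lemma group_action_act_col:
  assumes "group_action G A \<Gamma>" and "\<Phi> \<subseteq> extensional A"
    and closed: "\<And>g \<phi>. g \<in> carrier G \<Longrightarrow> \<phi> \<in> \<Phi> \<Longrightarrow> act_col \<Gamma> A g \<phi> \<in> \<Phi>"
  shows "group_action G \<Phi> (\<lambda>g. \<lambda>\<phi>\<in>\<Phi>. act_col \<Gamma> A (inv\<^bsub>G\<^esub> g) \<phi>)"
proof -
  interpret G: group G
    using assms(1) by (simp add: group_action_def group_hom_def)
  show ?thesis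
  proof (rule group_actionI)
    fix g h \<phi>
    assume "g \<in> carrier G" and "h \<in> carrier G" and "\<phi> \<in> \<Phi>"
    then show "(\<lambda>\<phi>\<in>\<Phi>. act_col \<Gamma> A (inv\<^bsub>G\<^esub> (g \<otimes>\<^bsub>G\<^esub> h)) \<phi>) \<phi>
        = (\<lambda>\<phi>\<in>\<Phi>. act_col \<Gamma> A (inv\<^bsub>G\<^esub> g) \<phi>) ((\<lambda>\<phi>\<in>\<Phi>. act_col \<Gamma> A (inv\<^bsub>G\<^esub> h) \<phi>) \<phi>)"
      using closed by (simp add: G.inv_mult_group act_col_mult[OF assms(1)])
  qed (use assms(2,3) act_col_one[OF assms(1)] in auto)
qed

lemma orbit_act_col:
  assumes "group_action G A \<Gamma>" and "\<Phi> \<subseteq> extensional A" and "\<phi> \<in> \<Phi>"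
  shows "orbit G (\<lambda>g. \<lambda>\<phi>\<in>\<Phi>. act_col \<Gamma> A (inv\<^bsub>G\<^esub> g) \<phi>) \<phi> = {act_col \<Gamma> A g \<phi> | g. g \<in> carrier G}"
proof -
  interpret G: group G
    using assms(1) by (simp add: group_action_def group_hom_def)
  let ?\<psi> = "\<lambda>g. \<lambda>\<phi>\<in>\<Phi>. act_col \<Gamma> A (inv\<^bsub>G\<^esub> g) \<phi>"
  show ?thesis
    unfolding orbit_def
  proof (intro equalityI subsetI)
    fix \<chi>
    assume "\<chi> \<in> {?\<psi> g \<phi> | g. g \<in> carrier G}"
    then obtain g where "g \<in> carrier G" and "\<chi> = act_col \<Gamma> A (inv\<^bsub>G\<^esub> g) \<phi>"
      using assms(3) by auto
    then show "\<chi> \<in> {act_col \<Gamma> A g \<phi> | g. g \<in> carrier G}"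
      using G.inv_closed by blast
  next
    fix \<chi>
    assume "\<chi> \<in> {act_col \<Gamma> A g \<phi> | g. g \<in> carrier G}"
    then obtain g where "g \<in> carrier G" and "\<chi> = ?\<psi> (inv\<^bsub>G\<^esub> g) \<phi>"
      using assms(3) by auto
    then show "\<chi> \<in> {?\<psi> g \<phi> | g. g \<in> carrier G}"
      using G.inv_closed by blast
  qed
qed

lemma card_col_orbits_burnside:
  assumes "group_action G A \<Gamma>" and "\<Phi> \<subseteq> extensional A"
    and closed: "\<And>g \<phi>. g \<in> carrier G \<Longrightarrow> \<phi> \<in> \<Phi> \<Longrightarrow> act_col \<Gamma> A g \<phi> \<in> \<Phi>"
    and "finite (carrier G)" and "finite \<Phi>"
  shows "card (col_orbits G \<Gamma> A \<Phi>) * card (carrier G)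
    = (\<Sum>g\<in>carrier G. card {\<phi> \<in> \<Phi>. act_col \<Gamma> A g \<phi> = \<phi>})"
proof -
  interpret G: group G
    using assms(1) by (simp add: group_action_def group_hom_def)
  let ?\<psi> = "\<lambda>g. \<lambda>\<phi>\<in>\<Phi>. act_col \<Gamma> A (inv\<^bsub>G\<^esub> g) \<phi>"
  interpret \<psi>: group_action G \<Phi> ?\<psi>
    using group_action_act_col[OF assms(1-3)] .
  have "col_orbits G \<Gamma> A \<Phi> = orbits G \<Phi> ?\<psi>"
    using orbit_act_col[OF assms(1,2)] by (auto simp: col_orbits_def orbits_def)
  moreover have "invariants \<Phi> ?\<psi> g = {\<phi> \<in> \<Phi>. act_col \<Gamma> A g \<phi> = \<phi>}" if "g \<in> carrier G" for g
  proof -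
    have cancel: "act_col \<Gamma> A h (act_col \<Gamma> A (inv\<^bsub>G\<^esub> h) \<phi>) = \<phi>"
      if "h \<in> carrier G" and "\<phi> \<in> \<Phi>" for h \<phi>
      using act_col_mult[OF assms(1) G.inv_closed[OF that(1)] that(1), of \<phi>]
        act_col_one[OF assms(1), of \<phi>] assms(2) that by auto
    have "act_col \<Gamma> A (inv\<^bsub>G\<^esub> g) \<phi> = \<phi> \<longleftrightarrow> act_col \<Gamma> A g \<phi> = \<phi>" if "\<phi> \<in> \<Phi>" for \<phi>
      using cancel[OF \<open>g \<in> carrier G\<close> that] cancel[OF G.inv_closed[OF \<open>g \<in> carrier G\<close>] that]
        \<open>g \<in> carrier G\<close> by auto
    then show ?thesis
      by (auto simp: invariants_def)
  qed
  ultimately show ?thesis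
    using \<psi>.burnside[OF assms(4,5)] by (simp add: Coset.order_def)
qed

lemma col_orbits_restrict:
  assumes "group_action G A \<Gamma>" and "\<Phi> \<subseteq> extensional A"
    and invariant: "\<And>g \<phi>. g \<in> carrier G \<Longrightarrow> \<phi> \<in> \<Phi> \<Longrightarrow> P (act_col \<Gamma> A g \<phi>) = P \<phi>"
  shows "{Orb \<in> col_orbits G \<Gamma> A \<Phi>. \<forall>\<phi>\<in>Orb. P \<phi>} = col_orbits G \<Gamma> A {\<phi> \<in> \<Phi>. P \<phi>}"
proof -
  interpret G: group G
    using assms(1) by (simp add: group_action_def group_hom_def)
  have "\<phi> \<in> {act_col \<Gamma> A g \<phi> | g. g \<in> carrier G}" if "\<phi> \<in> \<Phi>" for \<phi>
  proof -
    have "\<phi> = act_col \<Gamma> A \<one>\<^bsub>G\<^esub> \<phi>"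
      using act_col_one[OF assms(1), of \<phi>] assms(2) that by auto
    then show ?thesis
      using G.one_closed by blast
  qed
  then show ?thesis
    using invariant by (auto simp: col_orbits_def)
qed

section \<open>Valid colorings of a bipartite set\<close>

lemma valid_colorings_eq:
  assumes "X \<inter> Y = {}" and "\<Omega>X \<inter> \<Omega>Y = {}"
  shows "valid_colorings (X \<union> Y) X Y \<Omega>X \<Omega>Y = {\<phi> \<in> extensional (X \<union> Y). \<phi> ` X \<subseteq> \<Omega>X \<and> \<phi> ` Y \<subseteq> \<Omega>Y}"
  using assms by (auto simp: valid_colorings_def PiE_def)

lemma act_col_valid_colorings:
  assumes "X \<inter> Y = {}" and "\<Omega>X \<inter> \<Omega>Y = {}" and "bij_betw (\<Gamma> g) X X" and "bij_betw (\<Gamma> g) Y Y"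
    and "\<phi> \<in> valid_colorings (X \<union> Y) X Y \<Omega>X \<Omega>Y"
  shows "act_col \<Gamma> (X \<union> Y) g \<phi> \<in> valid_colorings (X \<union> Y) X Y \<Omega>X \<Omega>Y"
  using assms bij_betwE[OF assms(3)] bij_betwE[OF assms(4)]
  by (auto simp: valid_colorings_eq[OF assms(1,2)] act_col_def)

lemma bij_betw_fixed_valid_colorings:
  assumes "X \<inter> Y = {}" and "\<Omega>X \<inter> \<Omega>Y = {}" and "p ` X \<subseteq> X" and "p ` Y \<subseteq> Y"
  shows "bij_betw (\<lambda>\<phi>. (restrict \<phi> X, restrict \<phi> Y))
    {\<phi> \<in> valid_colorings (X \<union> Y) X Y \<Omega>X \<Omega>Y.
      (\<forall>x\<in>X \<union> Y. \<phi> (p x) = \<phi> x) \<and> (\<Sum>c\<in>X. \<omega>X (\<phi> c)) = a \<and> (\<Sum>c\<in>Y. \<omega>Y (\<phi> c)) = b}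
    ({u \<in> fixed_colorings p X \<Omega>X. (\<Sum>c\<in>X. \<omega>X (u c)) = a} \<times>
     {v \<in> fixed_colorings p Y \<Omega>Y. (\<Sum>c\<in>Y. \<omega>Y (v c)) = b})"
    (is "bij_betw ?split ?T (?U \<times> ?V)")
proof (rule bij_betw_byWitness[where f' = "\<lambda>(u, v) x. if x \<in> X then u x else v x"])
  show "?split ` ?T \<subseteq> ?U \<times> ?V"
    using assms(3,4) by (auto simp: valid_colorings_eq[OF assms(1,2)] fixed_colorings_def)
  show "(\<lambda>(u, v) x. if x \<in> X then u x else v x) ` (?U \<times> ?V) \<subseteq> ?T"
  proof (rule image_subsetI)
    fix uv
    assume "uv \<in> ?U \<times> ?V"
    then obtain u v where uv: "uv = (u, v)"
      and u: "u \<in> fixed_colorings p X \<Omega>X" "(\<Sum>c\<in>X. \<omega>X (u c)) = a"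
      and v: "v \<in> fixed_colorings p Y \<Omega>Y" "(\<Sum>c\<in>Y. \<omega>Y (v c)) = b"
      by blast
    let ?\<phi> = "\<lambda>x. if x \<in> X then u x else v x"
    have "?\<phi> \<in> valid_colorings (X \<union> Y) X Y \<Omega>X \<Omega>Y"
      using u(1) v(1) assms(1)
      by (auto simp: valid_colorings_eq[OF assms(1,2)] fixed_colorings_def PiE_def extensional_def)
    moreover have "\<forall>x\<in>X \<union> Y. ?\<phi> (p x) = ?\<phi> x"
      using u(1) v(1) assms(1,3,4) by (auto simp: fixed_colorings_def)
    moreover have "(\<Sum>c\<in>Y. \<omega>Y (?\<phi> c)) = b"
      unfolding v(2)[symmetric] using assms(1) by (intro sum.cong[OF refl]) auto
    ultimately show "(\<lambda>(u, v) x. if x \<in> X then u x else v x) uv \<in> ?T"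
      using u(2) by (simp add: uv)
  qed
qed (use assms(1) in \<open>auto simp: valid_colorings_eq[OF assms(1,2)] fixed_colorings_def PiE_def
      extensional_def fun_eq_iff disjoint_iff\<close>)

lemma finite_valid_colorings_weight_class:
  assumes "X \<inter> Y = {}" and "\<Omega>X \<inter> \<Omega>Y = {}" and "finite X" and "finite Y"
    and "finite_fibers \<Omega>X \<omega>X" and "finite_fibers \<Omega>Y \<omega>Y"
  shows "finite {\<phi> \<in> valid_colorings (X \<union> Y) X Y \<Omega>X \<Omega>Y.
    (\<Sum>c\<in>X. \<omega>X (\<phi> c)) = a \<and> (\<Sum>c\<in>Y. \<omega>Y (\<phi> c)) = b}"
proof -
  have "finite ({u \<in> fixed_colorings id X \<Omega>X. (\<Sum>c\<in>X. \<omega>X (u c)) = a} \<times>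
      {v \<in> fixed_colorings id Y \<Omega>Y. (\<Sum>c\<in>Y. \<omega>Y (v c)) = b})"
    using finite_fibers_PiE_sum[of X "\<lambda>_. \<Omega>X" "\<lambda>_. \<omega>X"] finite_fibers_PiE_sum[of Y "\<lambda>_. \<Omega>Y" "\<lambda>_. \<omega>Y"] assms
    by (simp add: fixed_colorings_def)
  then show ?thesis
    using bij_betw_finite[OF bij_betw_fixed_valid_colorings[OF assms(1,2), of id \<omega>X a \<omega>Y b]] by simp
qed

lemma bij_betw_invariant_part:
  assumes "group_action G A \<Gamma>" and "g \<in> carrier G" and "X \<subseteq> A"
    and "\<forall>a\<in>A. \<Gamma> g a \<in> X \<longleftrightarrow> a \<in> X"
  shows "bij_betw (\<Gamma> g) X X"
proof (rule bij_betw_subset)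
  show "bij_betw (\<Gamma> g) A A"
    using group_action.bij_prop0[OF assms(1,2)] by (simp add: Bij_def)
  show "\<Gamma> g ` X = X"
  proof
    show "\<Gamma> g ` X \<subseteq> X"
      using assms(3,4) by auto
    show "X \<subseteq> \<Gamma> g ` X"
    proof
      fix x
      assume "x \<in> X"
      then obtain y where "y \<in> A" and "x = \<Gamma> g y"
        using assms(3) group_action.surj_prop[OF assms(1,2)] by (metis imageE subsetD)
      then show "x \<in> \<Gamma> g ` X"
        using assms(4) \<open>x \<in> X\<close> by auto
    qed
  qed
qed fact

section \<open>Counting orbits by weight\<close>

lemma N_orbits_burnside:
  assumes "group_action G A \<Gamma>" and "finite (carrier G)" and "A = X \<union> Y" and "X \<inter> Y = {}"
    and bijX: "\<And>g. g \<in> carrier G \<Longrightarrow> bij_betw (\<Gamma> g) X X"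
    and bijY: "\<And>g. g \<in> carrier G \<Longrightarrow> bij_betw (\<Gamma> g) Y Y"
    and "\<Omega>X \<inter> \<Omega>Y = {}" and "finite X" and "finite Y"
    and "finite_fibers \<Omega>X \<omega>X" and "finite_fibers \<Omega>Y \<omega>Y"
  shows "N_orbits G \<Gamma> A X Y \<Omega>X \<Omega>Y \<omega>X \<omega>Y a b * card (carrier G)
    = (\<Sum>g\<in>carrier G. card {u \<in> fixed_colorings (\<Gamma> g) X \<Omega>X. (\<Sum>c\<in>X. \<omega>X (u c)) = a}
        * card {v \<in> fixed_colorings (\<Gamma> g) Y \<Omega>Y. (\<Sum>c\<in>Y. \<omega>Y (v c)) = b})"
proof -
  let ?\<Phi> = "valid_colorings A X Y \<Omega>X \<Omega>Y"
  let ?weights = "\<lambda>\<phi>. (\<Sum>c\<in>X. \<omega>X (\<phi> c)) = a \<and> (\<Sum>c\<in>Y. \<omega>Y (\<phi> c)) = b"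
  have extensional: "?\<Phi> \<subseteq> extensional A"
    by (auto simp: valid_colorings_def PiE_def)
  have weights_invariant: "?weights (act_col \<Gamma> A g \<phi>) = ?weights \<phi>" if "g \<in> carrier G" for g \<phi>
    using bijX[OF that] bijY[OF that] assms(3) by (simp add: sum_act_col)
  have closed: "act_col \<Gamma> A g \<phi> \<in> {\<phi> \<in> ?\<Phi>. ?weights \<phi>}"
    if "g \<in> carrier G" and "\<phi> \<in> {\<phi> \<in> ?\<Phi>. ?weights \<phi>}" for g \<phi>
    using that act_col_valid_colorings[OF assms(4,7) bijX bijY] weights_invariant assms(3) by auto
  have "card (col_orbits G \<Gamma> A {\<phi> \<in> ?\<Phi>. ?weights \<phi>}) * card (carrier G)
      = (\<Sum>g\<in>carrier G. card {\<phi> \<in> {\<phi> \<in> ?\<Phi>. ?weights \<phi>}. act_col \<Gamma> A g \<phi> = \<phi>})"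
    using extensional closed assms(2) finite_valid_colorings_weight_class[OF assms(4,7-11)] assms(3)
    by (intro card_col_orbits_burnside[OF assms(1)]) auto
  also have "\<dots> = (\<Sum>g\<in>carrier G. card {\<phi> \<in> ?\<Phi>. (\<forall>x\<in>A. \<phi> (\<Gamma> g x) = \<phi> x) \<and> ?weights \<phi>})"
    using extensional by (intro sum.cong refl arg_cong[where f = card]) (auto simp: act_col_fixed_iff)
  also have "\<dots> = (\<Sum>g\<in>carrier G. card {u \<in> fixed_colorings (\<Gamma> g) X \<Omega>X. (\<Sum>c\<in>X. \<omega>X (u c)) = a}
        * card {v \<in> fixed_colorings (\<Gamma> g) Y \<Omega>Y. (\<Sum>c\<in>Y. \<omega>Y (v c)) = b})"
  proof (intro sum.cong refl)
    fix g
    assume "g \<in> carrier G"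
    then have "\<Gamma> g ` X \<subseteq> X" and "\<Gamma> g ` Y \<subseteq> Y"
      using bijX bijY by (auto simp: bij_betw_def)
    then show "card {\<phi> \<in> ?\<Phi>. (\<forall>x\<in>A. \<phi> (\<Gamma> g x) = \<phi> x) \<and> ?weights \<phi>}
        = card {u \<in> fixed_colorings (\<Gamma> g) X \<Omega>X. (\<Sum>c\<in>X. \<omega>X (u c)) = a}
          * card {v \<in> fixed_colorings (\<Gamma> g) Y \<Omega>Y. (\<Sum>c\<in>Y. \<omega>Y (v c)) = b}"
      using bij_betw_same_card[OF bij_betw_fixed_valid_colorings[OF assms(4,7)]] assms(3)
      by (simp add: card_cartesian_product)
  qed
  finally show ?thesis
    using col_orbits_restrict[OF assms(1) extensional weights_invariant] by (simp add: N_orbits_def)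
qed

lemma N_orbits_series:
  assumes "group_action G A \<Gamma>" and "finite (carrier G)" and "A = X \<union> Y" and "X \<inter> Y = {}"
    and "\<And>g. g \<in> carrier G \<Longrightarrow> bij_betw (\<Gamma> g) X X"
    and "\<And>g. g \<in> carrier G \<Longrightarrow> bij_betw (\<Gamma> g) Y Y"
    and "\<Omega>X \<inter> \<Omega>Y = {}" and "finite X" and "finite Y"
    and "finite_fibers \<Omega>X \<omega>X" and "finite_fibers \<Omega>Y \<omega>Y"
  shows "Abs_fps (\<lambda>b. Abs_fps (\<lambda>a. of_nat (N_orbits G \<Gamma> A X Y \<Omega>X \<Omega>Y \<omega>X \<omega>Y a b) :: rat))
      = fps_const (fps_const (1 / of_nat (card (carrier G)))) *
        (\<Sum>g\<in>carrier G. fps_const (weight_fps (fixed_colorings (\<Gamma> g) X \<Omega>X) (\<lambda>\<phi>. \<Sum>c\<in>X. \<omega>X (\<phi> c)))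
          * weight_fps (fixed_colorings (\<Gamma> g) Y \<Omega>Y) (\<lambda>\<phi>. \<Sum>c\<in>Y. \<omega>Y (\<phi> c)))"
    (is "?N = ?Z")
proof (intro fps_ext)
  fix b a
  interpret G: group G
    using assms(1) by (simp add: group_action_def group_hom_def)
  have "card (carrier G) > 0"
    using assms(2) G.one_closed by (auto simp: card_gt_0_iff)
  moreover have "(of_nat (N_orbits G \<Gamma> A X Y \<Omega>X \<Omega>Y \<omega>X \<omega>Y a b) :: rat) * of_nat (card (carrier G))
      = (\<Sum>g\<in>carrier G. of_nat (card {u \<in> fixed_colorings (\<Gamma> g) X \<Omega>X. (\<Sum>c\<in>X. \<omega>X (u c)) = a})
          * of_nat (card {v \<in> fixed_colorings (\<Gamma> g) Y \<Omega>Y. (\<Sum>c\<in>Y. \<omega>Y (v c)) = b}))"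
    using N_orbits_burnside[OF assms, of a b] by (simp flip: of_nat_mult of_nat_sum)
  ultimately show "?N $ b $ a = ?Z $ b $ a"
    by (simp add: fps_sum_nth weight_fps_nth field_simps flip: fps_of_nat)
qed

lemma fps_const_prod: "fps_const (\<Prod>k\<in>S. f k) = (\<Prod>k\<in>S. fps_const (f k))"
  by (induction S rule: infinite_finite_induct) (simp_all flip: fps_const_mult)

lemma bip_cycle_index_eq_fixed_colorings:
  fixes G :: "('g, 'm) monoid_scheme" and \<Gamma> :: "'g \<Rightarrow> 'a \<Rightarrow> 'a"
  assumes "\<And>g. g \<in> carrier G \<Longrightarrow> bij_betw (\<Gamma> g) X X" and "\<And>g. g \<in> carrier G \<Longrightarrow> bij_betw (\<Gamma> g) Y Y"
    and "finite X" and "finite Y" and "card X \<le> n" and "card Y \<le> n"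
    and "finite_fibers \<Omega>X \<omega>X" and "finite_fibers \<Omega>Y \<omega>Y"
  shows "bip_cycle_index G \<Gamma> X Y n
      (\<lambda>k. fps_const (gen_fun \<Omega>X \<omega>X oo fps_X ^ k))
      (\<lambda>k. Abs_fps (\<lambda>i. fps_const (of_nat (card {c \<in> \<Omega>Y. \<omega>Y c = i}))) oo fps_X ^ k)
    = fps_const (fps_const (1 / of_nat (card (carrier G)))) *
      (\<Sum>g\<in>carrier G. fps_const (weight_fps (fixed_colorings (\<Gamma> g) X \<Omega>X) (\<lambda>\<phi>. \<Sum>c\<in>X. \<omega>X (\<phi> c)))
        * weight_fps (fixed_colorings (\<Gamma> g) Y \<Omega>Y) (\<lambda>\<phi>. \<Sum>c\<in>Y. \<omega>Y (\<phi> c)))"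
proof -
  have gen_funX: "gen_fun \<Omega>X \<omega>X = weight_fps \<Omega>X \<omega>X"
    by (simp add: gen_fun_def weight_fps_def)
  have gen_funY: "Abs_fps (\<lambda>i. fps_const (of_nat (card {c \<in> \<Omega>Y. \<omega>Y c = i}))) = weight_fps \<Omega>Y \<omega>Y"
    by (simp add: weight_fps_def fps_of_nat)
  show ?thesis
    unfolding bip_cycle_index_def gen_funX gen_funY
  proof (intro arg_cong2[where f = "(*)"] refl sum.cong)
    fix g
    assume g: "g \<in> carrier G"
    show "(\<Prod>k\<in>{1..n}. fps_const (weight_fps \<Omega>X \<omega>X oo fps_X ^ k :: rat fps) ^ cycles_in (\<Gamma> g) X k
          * (weight_fps \<Omega>Y \<omega>Y oo fps_X ^ k) ^ cycles_in (\<Gamma> g) Y k)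
      = fps_const (weight_fps (fixed_colorings (\<Gamma> g) X \<Omega>X) (\<lambda>\<phi>. \<Sum>c\<in>X. \<omega>X (\<phi> c)))
        * weight_fps (fixed_colorings (\<Gamma> g) Y \<Omega>Y) (\<lambda>\<phi>. \<Sum>c\<in>Y. \<omega>Y (\<phi> c))"
      using weight_fps_fixed_colorings[where 'r = rat, OF assms(3) assms(1)[OF g] assms(7,5)]
        weight_fps_fixed_colorings[where 'r = "rat fps", OF assms(4) assms(2)[OF g] assms(8,6)]
      by (simp add: prod.distrib flip: fps_const_prod)
  qed
qed

theorem mainTheorem2:
  fixes G :: "('g, 'm) monoid_scheme" and \<Gamma> :: "'g \<Rightarrow> 'a \<Rightarrow> 'a"
    and A X Y :: "'a set" and \<Omega>X \<Omega>Y :: "'c set" and \<omega>X \<omega>Y :: "'c \<Rightarrow> nat"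
  assumes "group_action G A \<Gamma>"
    and "finite (carrier G)"
    and "finite A" and "A = X \<union> Y" and "X \<inter> Y = {}"
    and "\<forall>g\<in>carrier G. \<forall>a\<in>A. (\<Gamma> g a \<in> X \<longleftrightarrow> a \<in> X) \<and> (\<Gamma> g a \<in> Y \<longleftrightarrow> a \<in> Y)"
    and "\<Omega>X \<inter> \<Omega>Y = {}"
    and "\<forall>c\<in>\<Omega>X. \<omega>X c > 0" and "\<forall>c\<in>\<Omega>Y. \<omega>Y c > 0"
    and "\<forall>i. finite {c \<in> \<Omega>X. \<omega>X c = i}" and "\<forall>i. finite {c \<in> \<Omega>Y. \<omega>Y c = i}"
  shows "Abs_fps (\<lambda>b. Abs_fps (\<lambda>a. of_nat (N_orbits G \<Gamma> A X Y \<Omega>X \<Omega>Y \<omega>X \<omega>Y a b)))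
       = bip_cycle_index G \<Gamma> X Y (card A)
           (\<lambda>k. fps_const (gen_fun \<Omega>X \<omega>X oo fps_X ^ k))
           (\<lambda>k. Abs_fps (\<lambda>i. fps_const (of_nat (card {c \<in> \<Omega>Y. \<omega>Y c = i}))) oo fps_X ^ k)"
proof -
  have bijX: "bij_betw (\<Gamma> g) X X" and bijY: "bij_betw (\<Gamma> g) Y Y" if "g \<in> carrier G" for g
    using assms(4,6) that by (auto intro!: bij_betw_invariant_part[OF assms(1)])
  have finite: "finite X" "finite Y" and card: "card X \<le> card A" "card Y \<le> card A"
    using assms(3,4) by (auto intro: card_mono)
  show ?thesis
    using N_orbits_series[OF assms(1,2,4,5) bijX bijY assms(7) finite assms(10,11)]
      bip_cycle_index_eq_fixed_colorings[where G = G and \<Gamma> = \<Gamma>, OF bijX bijY finite card assms(10,11)]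
    by simp
qed

end
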